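(* With probability $1-o(n^{-2})$: (i) $\mathbf m_0^f=e^{-d}pm+O(\sqrt m\log^4 n)$; (ii) $\mathbf m_0^u=e^{-d}(1-p)m+O(\sqrt m\log^4 n)$; (iii) $\mathbf m_1^f=(1-e^{-d})qm+O(\sqrt m\log^4 n)$; (iv) $\mathbf m_1^u=(1-e^{-d})(1-q)m+O(\sqrt m\log^4 n)$.
   Context: Setting: $n$ individuals, $k\sim n^{\theta}$ for fixed $\theta\in(0,1)$ of them infected, the infected set uniformly random of size $k$; constants $c,d>0$; $m=ck\log(n/k)$ tests and $\Delta=cd\log(n/k)$. Constant-column design: each individual independently is assigned to exactly $\Delta$ distinct tests chosen uniformly at random. A test is truly positive if it contains an infected individual and truly negative otherwise. Displayed results: independently across tests, a truly negative test is flipped (displayed positive) with probability $p$, a truly positive test is flipped (displayed negative) with probability $q$, where $p,q\ge0$, $p+q<1$. For $t\in\{0,1\}$, $\mathbf m_t^f$ is the number of tests with true result $t$ that are flipped and $\mathbf m_t^u$ the number with true result $t$ that are not flipped ($t=0$ negative, $t=1$ positive). $\log$ natural; asymptotics as $n\to\infty$. *)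

theory Defs
  imports "HOL-Probability.Probability" "HOL-Library.Landau_Symbols"
begin

text \<open>Individuals are 0..<n, tests are 0..<m. An outcome is a triple (S, G, F):
 S the infected set, G i the set of tests of individual i, F a the flip indicator of test a.\<close>

definition truepos :: "nat set \<Rightarrow> (nat \<Rightarrow> nat set) \<Rightarrow> nat \<Rightarrow> bool" where
  "truepos S G a \<longleftrightarrow> (\<exists>i\<in>S. a \<in> G i)"

definition infected_pmf :: "nat \<Rightarrow> nat \<Rightarrow> nat set pmf" where
  "infected_pmf n k = pmf_of_set {S. S \<subseteq> {..<n} \<and> card S = k}"

definition design_pmf :: "nat \<Rightarrow> nat \<Rightarrow> nat \<Rightarrow> (nat \<Rightarrow> nat set) pmf" where
  "design_pmf n m \<Delta> = Pi_pmf {..<n} {} (\<lambda>i. pmf_of_set {T. T \<subseteq> {..<m} \<and> card T = \<Delta>})"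

definition flip_pmf :: "nat \<Rightarrow> real \<Rightarrow> real \<Rightarrow> nat set \<Rightarrow> (nat \<Rightarrow> nat set) \<Rightarrow> (nat \<Rightarrow> bool) pmf" where
  "flip_pmf m p q S G = Pi_pmf {..<m} False
     (\<lambda>a. bernoulli_pmf (if truepos S G a then q else p))"

definition gt_model :: "nat \<Rightarrow> nat \<Rightarrow> nat \<Rightarrow> nat \<Rightarrow> real \<Rightarrow> real \<Rightarrow>
    (nat set \<times> (nat \<Rightarrow> nat set) \<times> (nat \<Rightarrow> bool)) pmf" where
  "gt_model n k m \<Delta> p q =
     do { S \<leftarrow> infected_pmf n k;
          G \<leftarrow> design_pmf n m \<Delta>;
          F \<leftarrow> flip_pmf m p q S G;
          return_pmf (S, G, F) }"

text \<open>So m_0^f = mcount m False True, m_0^u = mcount m False False,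
  m_1^f = mcount m True True, m_1^u = mcount m True False.\<close>
definition mcount :: "nat \<Rightarrow> bool \<Rightarrow> bool \<Rightarrow> nat set \<times> (nat \<Rightarrow> nat set) \<times> (nat \<Rightarrow> bool) \<Rightarrow> nat" where
  "mcount m t f \<omega> = (case \<omega> of (S, G, F) \<Rightarrow>
      card {a \<in> {..<m}. truepos S G a = t \<and> F a = f})"

end

theory Submission
  imports Defs "HOL-Real_Asymp.Real_Asymp"
begin

(* Condition on the infected set S. The number of truly negative tests is a function of the
   independent test choices G i of the individuals, and changing G i moves it by at most Delta
   if i is infected and not at all otherwise; McDiarmid's inequality therefore concentrates it
   around its mean m (1 - Delta/m)^k, which is e^(-k Delta/m) m + O(k Delta^2 / m). Given S and G, the
   flipped counts are sums of independent Bernoulli variables, so McDiarmid's inequality (now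
   with differences 1) concentrates them around p m_0 and q m_1. At deviation sqrt m log^4 n
   each failure probability is at most 2 exp (-4 log n) = o(n^-2), and the unflipped counts
   are the complements m_t - m_t^f. *)

lemma measure_bind_pmf_le:
  assumes "\<And>x. x \<in> set_pmf M \<Longrightarrow> measure_pmf.prob (N x) A \<le> b"
  shows "measure_pmf.prob (bind_pmf M N) A \<le> b"
proof -
  obtain x where "x \<in> set_pmf M" using set_pmf_not_empty[of M] by auto
  then have b: "0 \<le> b" using assms[of x] measure_nonneg order_trans by blast
  have "emeasure (bind_pmf M N) A = (\<integral>\<^sup>+x. emeasure (N x) A \<partial>M)" by simp
  also have "\<dots> \<le> (\<integral>\<^sup>+x. ennreal b \<partial>M)"
    using assms by (intro nn_integral_mono_AE AE_pmfI) (simp add: measure_pmf.emeasure_eq_measure ennreal_leI)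
  also have "\<dots> = ennreal b" by (simp add: measure_pmf.emeasure_space_1)
  finally show ?thesis using b by (simp add: measure_pmf.emeasure_eq_measure)
qed

lemma expectation_bind_pmf_finite:
  fixes f :: "'b \<Rightarrow> real"
  assumes "finite (set_pmf M)" and "\<And>x. x \<in> set_pmf M \<Longrightarrow> finite (set_pmf (N x))"
  shows "measure_pmf.expectation (bind_pmf M N) f =
         measure_pmf.expectation M (\<lambda>x. measure_pmf.expectation (N x) f)"
proof -
  have "measure_pmf.expectation (bind_pmf M N) f =
        (\<Sum>x\<in>set_pmf M. measure_pmf.expectation (N x) f * pmf M x)"
    by (simp add: pmf_expectation_bind[OF assms order_refl] mult.commute)
  also have "\<dots> = measure_pmf.expectation M (\<lambda>x. measure_pmf.expectation (N x) f)"
    by (rule integral_measure_pmf_real[OF assms(1), symmetric])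
  finally show ?thesis .
qed

lemma finite_set_Pi_pmf:
  assumes "finite A" and "\<And>i. i \<in> A \<Longrightarrow> finite (set_pmf (M i))"
  shows "finite (set_pmf (Pi_pmf A dflt M))"
  using assms by (auto simp: set_Pi_pmf)

lemma Hoeffdings_lemma_pmf:
  fixes v :: "'a \<Rightarrow> real"
  assumes fin: "finite (set_pmf N)"
    and range: "\<And>y y'. y \<in> set_pmf N \<Longrightarrow> y' \<in> set_pmf N \<Longrightarrow> \<bar>v y - v y'\<bar> \<le> r" and "l > 0"
  shows "measure_pmf.expectation N (\<lambda>y. exp (l * (v y - measure_pmf.expectation N v)))
           \<le> exp (l\<^sup>2 * r\<^sup>2 / 8)"
proof -
  define a where "a = Min (v ` set_pmf N)"
  have "a \<in> v ` set_pmf N"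
    unfolding a_def using fin set_pmf_not_empty by (intro Min_in) auto
  then obtain y0 where y0: "y0 \<in> set_pmf N" "a = v y0" by auto
  have "v y \<in> {a..a + r}" if "y \<in> set_pmf N" for y
  proof -
    have "a \<le> v y"
      unfolding a_def using fin that by (intro Min_le) auto
    with range[OF that y0(1)] y0(2) show ?thesis by auto
  qed
  interpret interval_bounded_random_variable "measure_pmf N" v a "a + r"
    by unfold_locales (simp, rule AE_pmfI, fact)
  have "ennreal (measure_pmf.expectation N (\<lambda>y. exp (l * (v y - measure_pmf.expectation N v))))
          = (\<integral>\<^sup>+y. exp (l * (v y - measure_pmf.expectation N v)) \<partial>N)"
    by (intro nn_integral_eq_integral[symmetric] integrable_measure_pmf_finite fin) simp_all
  also have "\<dots> \<le> ennreal (exp (l\<^sup>2 * (a + r - a)\<^sup>2 / 8))"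
    by (rule Hoeffdings_lemma_nn_integral[OF \<open>l > 0\<close>])
  finally show ?thesis by simp
qed

definition bounded_differences ::
    "'i set \<Rightarrow> ('i \<Rightarrow> 'b) set \<Rightarrow> (('i \<Rightarrow> 'b) \<Rightarrow> real) \<Rightarrow> ('i \<Rightarrow> real) \<Rightarrow> bool" where
  "bounded_differences A X f c \<longleftrightarrow>
     (\<forall>i\<in>A. \<forall>x\<in>X. \<forall>y\<in>X. (\<forall>j. j \<noteq> i \<longrightarrow> x j = y j) \<longrightarrow> \<bar>f x - f y\<bar> \<le> c i)"

lemma bounded_differencesD:
  "bounded_differences A X f c \<Longrightarrow> i \<in> A \<Longrightarrow> x \<in> X \<Longrightarrow> y \<in> X \<Longrightarrow> (\<And>j. j \<noteq> i \<Longrightarrow> x j = y j)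
     \<Longrightarrow> \<bar>f x - f y\<bar> \<le> c i"
  unfolding bounded_differences_def by blast

lemma bounded_differencesI:
  assumes "\<And>i x y. i \<in> A \<Longrightarrow> x \<in> X \<Longrightarrow> y \<in> X \<Longrightarrow> (\<And>j. j \<noteq> i \<Longrightarrow> x j = y j)
             \<Longrightarrow> f y \<le> f x + c i"
  shows "bounded_differences A X f c"
  unfolding bounded_differences_def
proof (intro ballI impI allI)
  fix i x y assume "i \<in> A" "x \<in> X" "y \<in> X" "\<forall>j. j \<noteq> i \<longrightarrow> x j = y j"
  then have "f y \<le> f x + c i" "f x \<le> f y + c i"
    by (auto intro!: assms)
  then show "\<bar>f x - f y\<bar> \<le> c i" by linarith
qed

lemma bounded_differences_uminus:
  "bounded_differences A X (\<lambda>x. - f x) c \<longleftrightarrow> bounded_differences A X f c"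
  by (simp add: bounded_differences_def abs_minus_commute)

lemma Pi_pmf_insert_bind:
  assumes "finite A" "i \<notin> A"
  shows "Pi_pmf (insert i A) dflt M = Pi_pmf A dflt M \<bind> (\<lambda>g. map_pmf (\<lambda>y. g(i := y)) (M i))"
  using assms by (simp add: Pi_pmf_insert' map_pmf_def bind_commute_pmf[of "M i"])

lemma bounded_differences_average_coordinate:
  assumes "finite A" "i \<notin> A" "finite (set_pmf (M i))"
    and bd: "bounded_differences (insert i A) (set_pmf (Pi_pmf (insert i A) dflt M)) f c"
  shows "bounded_differences A (set_pmf (Pi_pmf A dflt M))
           (\<lambda>g. measure_pmf.expectation (M i) (\<lambda>y. f (g(i := y)))) c"
proof (rule bounded_differencesI)
  fix j g g' assume j: "j \<in> A" and g: "g \<in> set_pmf (Pi_pmf A dflt M)" and g': "g' \<in> set_pmf (Pi_pmf A dflt M)"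
    and agree: "\<And>j'. j' \<noteq> j \<Longrightarrow> g j' = g' j'"
  have upd: "h(i := y) \<in> set_pmf (Pi_pmf (insert i A) dflt M)"
    if "h \<in> set_pmf (Pi_pmf A dflt M)" "y \<in> set_pmf (M i)" for h y
    using that assms(1,2) by (auto simp: Pi_pmf_insert_bind)
  have "measure_pmf.expectation (M i) (\<lambda>y. f (g'(i := y)))
          \<le> measure_pmf.expectation (M i) (\<lambda>y. f (g(i := y)) + c j)"
  proof (intro integral_mono_AE AE_pmfI integrable_measure_pmf_finite assms(3))
    fix y assume y: "y \<in> set_pmf (M i)"
    have "\<bar>f (g(i := y)) - f (g'(i := y))\<bar> \<le> c j"
      using j agree assms(2) by (intro bounded_differencesD[OF bd _ upd[OF g y] upd[OF g' y]]) auto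
    then show "f (g'(i := y)) \<le> f (g(i := y)) + c j" by linarith
  qed
  then show "measure_pmf.expectation (M i) (\<lambda>y. f (g'(i := y)))
               \<le> measure_pmf.expectation (M i) (\<lambda>y. f (g(i := y))) + c j"
    by (simp add: integrable_measure_pmf_finite assms(3))
qed

lemma McDiarmid_mgf_Pi_pmf:
  fixes f :: "('i \<Rightarrow> 'b) \<Rightarrow> real"
  assumes "finite A" "\<And>i. i \<in> A \<Longrightarrow> finite (set_pmf (M i))" "l > 0"
    and "bounded_differences A (set_pmf (Pi_pmf A dflt M)) f c"
  shows "measure_pmf.expectation (Pi_pmf A dflt M)
           (\<lambda>x. exp (l * (f x - measure_pmf.expectation (Pi_pmf A dflt M) f)))
         \<le> exp (l\<^sup>2 * (\<Sum>i\<in>A. (c i)\<^sup>2) / 8)"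
  using assms(1,2,4)
proof (induction A arbitrary: f rule: finite_induct)
  case empty
  then show ?case by simp
next
  case (insert i A)
  let ?P = "Pi_pmf (insert i A) dflt M" and ?Q = "Pi_pmf A dflt M"
  have fin_Q: "finite (set_pmf ?Q)" and fin_Mi: "finite (set_pmf (M i))"
    using insert by (auto intro: finite_set_Pi_pmf)
  have P_eq: "?P = ?Q \<bind> (\<lambda>g. map_pmf (\<lambda>y. g(i := y)) (M i))"
    using insert.hyps by (rule Pi_pmf_insert_bind)
  have E_P: "measure_pmf.expectation ?P \<phi> =
      measure_pmf.expectation ?Q (\<lambda>g. measure_pmf.expectation (M i) (\<lambda>y. \<phi> (g(i := y))))"
    for \<phi> :: "_ \<Rightarrow> real"
    by (simp add: P_eq expectation_bind_pmf_finite fin_Q fin_Mi)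
  have upd: "g(i := y) \<in> set_pmf ?P" if "g \<in> set_pmf ?Q" "y \<in> set_pmf (M i)" for g y
    using that by (auto simp: P_eq)
  define h where "h g = measure_pmf.expectation (M i) (\<lambda>y. f (g(i := y)))" for g
  define \<mu> where "\<mu> = measure_pmf.expectation ?P f"
  have \<mu>_eq: "\<mu> = measure_pmf.expectation ?Q h"
    unfolding \<mu>_def E_P h_def ..
  have mgf_coordinate: "measure_pmf.expectation (M i) (\<lambda>y. exp (l * (f (g(i := y)) - h g)))
                          \<le> exp (l\<^sup>2 * (c i)\<^sup>2 / 8)" if g: "g \<in> set_pmf ?Q" for g
    unfolding h_def using fin_Mi \<open>l > 0\<close>
    by (intro Hoeffdings_lemma_pmf bounded_differencesD[OF insert.prems(2) _ upd[OF g] upd[OF g]]) auto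
  have IH: "measure_pmf.expectation ?Q (\<lambda>g. exp (l * (h g - \<mu>))) \<le> exp (l\<^sup>2 * (\<Sum>j\<in>A. (c j)\<^sup>2) / 8)"
    unfolding \<mu>_eq h_def using insert
    by (intro insert.IH bounded_differences_average_coordinate) auto
  have "measure_pmf.expectation ?P (\<lambda>x. exp (l * (f x - \<mu>))) =
        measure_pmf.expectation ?Q (\<lambda>g. exp (l * (h g - \<mu>)) *
          measure_pmf.expectation (M i) (\<lambda>y. exp (l * (f (g(i := y)) - h g))))"
    unfolding E_P by (simp flip: Bochner_Integration.integral_mult_right_zero
                          add: mult_exp_exp algebra_simps)
  also have "\<dots> \<le> measure_pmf.expectation ?Q (\<lambda>g. exp (l * (h g - \<mu>)) * exp (l\<^sup>2 * (c i)\<^sup>2 / 8))"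
    by (intro integral_mono_AE AE_pmfI integrable_measure_pmf_finite fin_Q
              mult_left_mono mgf_coordinate) auto
  also have "\<dots> \<le> exp (l\<^sup>2 * (\<Sum>j\<in>A. (c j)\<^sup>2) / 8) * exp (l\<^sup>2 * (c i)\<^sup>2 / 8)"
    using IH by (simp add: mult_right_mono)
  also have "\<dots> = exp (l\<^sup>2 * (\<Sum>j\<in>insert i A. (c j)\<^sup>2) / 8)"
    using insert.hyps by (simp add: mult_exp_exp add_divide_distrib distrib_left)
  finally show ?case unfolding \<mu>_def .
qed

lemma McDiarmid_inequality_Pi_pmf_upper:
  fixes f :: "('i \<Rightarrow> 'b) \<Rightarrow> real"
  assumes "finite A" "\<And>i. i \<in> A \<Longrightarrow> finite (set_pmf (M i))"
    and "bounded_differences A (set_pmf (Pi_pmf A dflt M)) f c" and "t > 0"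
  shows "measure_pmf.prob (Pi_pmf A dflt M) {x. t \<le> f x - measure_pmf.expectation (Pi_pmf A dflt M) f}
           \<le> exp (- 2 * t\<^sup>2 / (\<Sum>i\<in>A. (c i)\<^sup>2))"
proof (cases "(\<Sum>i\<in>A. (c i)\<^sup>2) = 0")
  case False
  let ?P = "Pi_pmf A dflt M"
  define V where "V = (\<Sum>i\<in>A. (c i)\<^sup>2)"
  define \<mu> where "\<mu> = measure_pmf.expectation ?P f"
  define l where "l = 4 * t / V"
  have "V > 0"
    using False unfolding V_def by (simp add: order_le_neq_trans sum_nonneg)
  then have "l > 0"
    using \<open>t > 0\<close> by (simp add: l_def)
  have "measure_pmf.prob ?P {x. t \<le> f x - \<mu>} \<le> measure_pmf.prob ?P {x \<in> space ?P. exp (l * t) \<le> exp (l * (f x - \<mu>))}"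
    using \<open>l > 0\<close> by (intro measure_pmf.finite_measure_mono) auto
  also have "\<dots> \<le> measure_pmf.expectation ?P (\<lambda>x. exp (l * (f x - \<mu>))) / exp (l * t)"
    using assms(1,2) by (intro integral_Markov_inequality_measure[where A = UNIV]
                                 integrable_measure_pmf_finite finite_set_Pi_pmf) auto
  also have "\<dots> \<le> exp (l\<^sup>2 * V / 8) / exp (l * t)"
    unfolding \<mu>_def V_def using assms \<open>l > 0\<close> by (intro divide_right_mono McDiarmid_mgf_Pi_pmf) auto
  also have "\<dots> = exp (- 2 * t\<^sup>2 / V)"
    using \<open>V > 0\<close> by (simp add: l_def exp_diff[symmetric] field_simps power2_eq_square)
  finally show ?thesis unfolding \<mu>_def V_def .
qed simp

lemma McDiarmid_inequality_Pi_pmf: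
  fixes f :: "('i \<Rightarrow> 'b) \<Rightarrow> real"
  assumes "finite A" "\<And>i. i \<in> A \<Longrightarrow> finite (set_pmf (M i))"
    and "bounded_differences A (set_pmf (Pi_pmf A dflt M)) f c" and "t > 0"
  shows "measure_pmf.prob (Pi_pmf A dflt M) {x. t \<le> \<bar>f x - measure_pmf.expectation (Pi_pmf A dflt M) f\<bar>}
           \<le> 2 * exp (- 2 * t\<^sup>2 / (\<Sum>i\<in>A. (c i)\<^sup>2))"
proof -
  let ?P = "Pi_pmf A dflt M"
  define \<mu> where "\<mu> = measure_pmf.expectation ?P f"
  have upper: "measure_pmf.prob ?P {x. t \<le> f x - \<mu>} \<le> exp (- 2 * t\<^sup>2 / (\<Sum>i\<in>A. (c i)\<^sup>2))"
    unfolding \<mu>_def by (rule McDiarmid_inequality_Pi_pmf_upper[OF assms])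
  have lower: "measure_pmf.prob ?P {x. t \<le> \<mu> - f x} \<le> exp (- 2 * t\<^sup>2 / (\<Sum>i\<in>A. (c i)\<^sup>2))"
    using McDiarmid_inequality_Pi_pmf_upper[of A M dflt "\<lambda>x. - f x" c t] assms
    by (simp add: \<mu>_def bounded_differences_uminus)
  have "measure_pmf.prob ?P {x. t \<le> \<bar>f x - \<mu>\<bar>} \<le> measure_pmf.prob ?P ({x. t \<le> f x - \<mu>} \<union> {x. t \<le> \<mu> - f x})"
    by (intro measure_pmf.finite_measure_mono) auto
  also have "\<dots> \<le> measure_pmf.prob ?P {x. t \<le> f x - \<mu>} + measure_pmf.prob ?P {x. t \<le> \<mu> - f x}"
    by (rule measure_Un_le) auto
  finally show ?thesis
    using upper lower unfolding \<mu>_def by linarith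
qed

lemma real_card_filter_eq_sum_indicator:
  "finite A \<Longrightarrow> real (card {a \<in> A. P a}) = (\<Sum>a\<in>A. indicator {a. P a} a)"
  by (simp add: indicator_def sum.If_cases Int_def conj_commute)

lemma card_filter_add_card_filter_not:
  "finite A \<Longrightarrow> card {a \<in> A. P a} + card {a \<in> A. \<not> P a} = card A"
  by (subst card_Un_disjoint[symmetric]) (auto intro: arg_cong[where f = card])

abbreviation subsets_card :: "nat \<Rightarrow> nat \<Rightarrow> nat set set" where
  "subsets_card m D \<equiv> {T. T \<subseteq> {..<m} \<and> card T = D}"

lemma finite_subsets_card: "finite (subsets_card m D)"
  by (rule finite_subset[of _ "Pow {..<m}"]) auto

lemma subsets_card_nonempty: "D \<le> m \<Longrightarrow> subsets_card m D \<noteq> {}"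
proof -
  assume "D \<le> m"
  then have "{..<D} \<in> subsets_card m D" by auto
  then show ?thesis by blast
qed

lemma prob_subsets_card_avoid:
  assumes "D \<le> m" "a < m"
  shows "measure_pmf.prob (pmf_of_set (subsets_card m D)) {T. a \<notin> T} = 1 - real D / real m"
proof -
  have "measure_pmf.prob (pmf_of_set (subsets_card m D)) {T. a \<notin> T}
          = real (card (subsets_card m D \<inter> {T. a \<notin> T})) / real (card (subsets_card m D))"
    by (rule measure_pmf_of_set[OF subsets_card_nonempty[OF assms(1)] finite_subsets_card])
  also have "subsets_card m D \<inter> {T. a \<notin> T} = {T. T \<subseteq> {..<m} - {a} \<and> card T = D}"
    by auto
  also have "card \<dots> = (m - 1) choose D"
    using assms by (simp add: n_subsets)
  also have "card (subsets_card m D) = m choose D"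
    by (simp add: n_subsets)
  also have "real ((m - 1) choose D) / real (m choose D) = 1 - real D / real m"
  proof -
    have "real ((m - D) * (m choose D)) = real (m * ((m - 1) choose D))"
      by (simp only: binomial_absorb_comp)
    then have "real m * real ((m - 1) choose D) = (real m - real D) * real (m choose D)"
      using assms by (simp add: of_nat_diff)
    moreover have "real (m choose D) > 0" "real m > 0"
      using assms by simp_all
    ultimately show ?thesis by (simp add: field_simps)
  qed
  finally show ?thesis .
qed

lemma set_pmf_of_subsets_card:
  "D \<le> m \<Longrightarrow> set_pmf (pmf_of_set (subsets_card m D)) = subsets_card m D"
  by (rule set_pmf_of_set[OF subsets_card_nonempty finite_subsets_card])

lemma set_design_pmf:
  "D \<le> m \<Longrightarrow> set_pmf (design_pmf n m D) = PiE_dflt {..<n} {} (\<lambda>_. subsets_card m D)"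
  unfolding design_pmf_def by (simp add: set_Pi_pmf set_pmf_of_subsets_card)

lemma finite_set_design_pmf: "D \<le> m \<Longrightarrow> finite (set_pmf (design_pmf n m D))"
  unfolding design_pmf_def
  by (intro finite_set_Pi_pmf) (simp_all add: set_pmf_of_subsets_card finite_subsets_card)

lemma mcount_Pair:
  "mcount m t f (S, G, F) = card {a \<in> {..<m}. truepos S G a = t \<and> F a = f}"
  by (simp add: mcount_def)

definition truecount :: "nat \<Rightarrow> bool \<Rightarrow> nat set \<Rightarrow> (nat \<Rightarrow> nat set) \<Rightarrow> nat" where
  "truecount m t S G = card {a \<in> {..<m}. truepos S G a = t}"

lemma expectation_truecount_negative:
  assumes S: "S \<subseteq> {..<n}" "card S = K" and "D \<le> m"
  shows "measure_pmf.expectation (design_pmf n m D) (\<lambda>G. real (truecount m False S G))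
           = real m * (1 - real D / real m) ^ K"
proof -
  let ?P = "design_pmf n m D"
  have avoid: "measure_pmf.prob ?P {G. \<forall>i\<in>S. a \<notin> G i} = (1 - real D / real m) ^ K"
    if "a < m" for a
  proof -
    define B where "B i = (if i \<in> S then {T. a \<notin> T} else UNIV)" for i
    have "{G. \<forall>i\<in>S. a \<notin> G i} = Pi {..<n} B"
      using S by (auto simp: B_def Pi_def)
    then have "measure_pmf.prob ?P {G. \<forall>i\<in>S. a \<notin> G i}
                 = (\<Prod>i<n. measure_pmf.prob (pmf_of_set (subsets_card m D)) (B i))"
      by (simp add: design_pmf_def measure_Pi_pmf_Pi)
    also have "\<dots> = (\<Prod>i<n. if i \<in> S then 1 - real D / real m else 1)"
      using assms that by (intro prod.cong) (auto simp: B_def prob_subsets_card_avoid)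
    also have "\<dots> = (1 - real D / real m) ^ K"
      using S by (simp add: prod.If_cases Int_absorb1)
    finally show ?thesis .
  qed
  have "real (truecount m False S G) = (\<Sum>a<m. indicator {G. \<forall>i\<in>S. a \<notin> G i} G)" for G
    unfolding truecount_def truepos_def
    by (subst real_card_filter_eq_sum_indicator) (auto simp: indicator_def)
  then have "measure_pmf.expectation ?P (\<lambda>G. real (truecount m False S G))
          = measure_pmf.expectation ?P (\<lambda>G. \<Sum>a<m. indicator {G. \<forall>i\<in>S. a \<notin> G i} G)"
    by presburger
  also have "\<dots> = (\<Sum>a<m. measure_pmf.prob ?P {G. \<forall>i\<in>S. a \<notin> G i})"
    by (simp add: Bochner_Integration.integral_sum integrable_measure_pmf_finite finite_set_design_pmf assms)
  also have "\<dots> = real m * (1 - real D / real m) ^ K"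
    by (simp add: avoid)
  finally show ?thesis .
qed

lemma bounded_differences_truecount_negative:
  assumes "S \<subseteq> {..<n}" "D \<le> m"
  shows "bounded_differences {..<n} (set_pmf (design_pmf n m D)) (\<lambda>G. real (truecount m False S G))
           (\<lambda>i. if i \<in> S then real D else 0)"
proof (rule bounded_differencesI)
  fix i G G' assume G: "G \<in> set_pmf (design_pmf n m D)" and agree: "\<And>j. j \<noteq> i \<Longrightarrow> G j = G' j"
  show "real (truecount m False S G') \<le> real (truecount m False S G) + (if i \<in> S then real D else 0)"
  proof (cases "i \<in> S")
    case False
    then have "truepos S G a = truepos S G' a" for a
      unfolding truepos_def using agree by metis
    with False show ?thesis unfolding truecount_def by simp
  next
    case True
    have "G i \<in> subsets_card m D"
      using G True assms by (auto simp: set_design_pmf PiE_dflt_def)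
    then have Gi: "finite (G i)" "card (G i) = D"
      by (auto intro: finite_subset)
    have "{a \<in> {..<m}. \<not> truepos S G' a} \<subseteq> {a \<in> {..<m}. \<not> truepos S G a} \<union> G i"
      unfolding truepos_def using agree by fastforce
    then have "truecount m False S G' \<le> card ({a \<in> {..<m}. \<not> truepos S G a} \<union> G i)"
      unfolding truecount_def by (intro card_mono) (simp_all add: Gi)
    also have "\<dots> \<le> truecount m False S G + D"
      using card_Un_le[of "{a \<in> {..<m}. \<not> truepos S G a}" "G i"] Gi
      unfolding truecount_def by simp
    finally show ?thesis using True by simp
  qed
qed

lemma truecount_negative_concentration:
  assumes "S \<subseteq> {..<n}" "card S = K" "D \<le> m" "t > 0"
  shows "measure_pmf.prob (design_pmf n m D)
           {G. t \<le> \<bar>real (truecount m False S G) - real m * (1 - real D / real m) ^ K\<bar>}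
         \<le> 2 * exp (- 2 * t\<^sup>2 / (real K * (real D)\<^sup>2))"
proof -
  have "(\<Sum>i<n. (if i \<in> S then real D else 0)\<^sup>2) = (\<Sum>i<n. if i \<in> S then (real D)\<^sup>2 else 0)"
    by (intro sum.cong) auto
  also have "\<dots> = real K * (real D)\<^sup>2"
    using assms(1,2) by (simp add: sum.If_cases Int_absorb1)
  finally have sum_squares: "(\<Sum>i<n. (if i \<in> S then real D else 0)\<^sup>2) = real K * (real D)\<^sup>2" .
  have "measure_pmf.prob (design_pmf n m D)
          {G. t \<le> \<bar>real (truecount m False S G) -
                   measure_pmf.expectation (design_pmf n m D) (\<lambda>G. real (truecount m False S G))\<bar>}
        \<le> 2 * exp (- 2 * t\<^sup>2 / (\<Sum>i<n. (if i \<in> S then real D else 0)\<^sup>2))"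
    unfolding design_pmf_def
    by (rule McDiarmid_inequality_Pi_pmf[OF _ _ bounded_differences_truecount_negative[OF assms(1,3),
          unfolded design_pmf_def] \<open>t > 0\<close>]) (simp_all add: finite_subsets_card set_pmf_of_subsets_card assms(3))
  then show ?thesis
    by (simp add: expectation_truecount_negative[OF assms(1-3)] sum_squares)
qed

lemma finite_set_flip_pmf: "finite (set_pmf (flip_pmf m p q S G))"
  unfolding flip_pmf_def by (rule finite_set_Pi_pmf) simp_all

lemma prob_flip_pmf_flipped:
  assumes "0 \<le> p" "p \<le> 1" "0 \<le> q" "q \<le> 1" "a < m"
  shows "measure_pmf.prob (flip_pmf m p q S G) {F. F a} = (if truepos S G a then q else p)"
proof -
  have "measure_pmf.prob (flip_pmf m p q S G) {F. F a}
          = measure_pmf.prob (map_pmf (\<lambda>F. F a) (flip_pmf m p q S G)) {True}"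
    by (simp add: vimage_def)
  also have "map_pmf (\<lambda>F. F a) (flip_pmf m p q S G) = bernoulli_pmf (if truepos S G a then q else p)"
    unfolding flip_pmf_def using assms by (subst Pi_pmf_component) auto
  finally show ?thesis
    using assms by (simp add: measure_pmf_single)
qed

lemma expectation_flipcount:
  assumes "0 \<le> p" "p \<le> 1" "0 \<le> q" "q \<le> 1"
  shows "measure_pmf.expectation (flip_pmf m p q S G) (\<lambda>F. real (mcount m t True (S, G, F)))
           = (if t then q else p) * real (truecount m t S G)"
proof -
  let ?P = "flip_pmf m p q S G"
  have "real (mcount m t True (S, G, F)) = (\<Sum>a<m. indicator {F. truepos S G a = t \<and> F a} F)" for F
    unfolding mcount_Pair by (subst real_card_filter_eq_sum_indicator) (auto simp: indicator_def)
  then have "measure_pmf.expectation ?P (\<lambda>F. real (mcount m t True (S, G, F)))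
               = (\<Sum>a<m. measure_pmf.prob ?P {F. truepos S G a = t \<and> F a})"
    by (simp add: Bochner_Integration.integral_sum integrable_measure_pmf_finite finite_set_flip_pmf)
  also have "\<dots> = (\<Sum>a<m. (if t then q else p) * indicator {a. truepos S G a = t} a)"
  proof (intro sum.cong refl)
    fix a assume "a \<in> {..<m}"
    then show "measure_pmf.prob ?P {F. truepos S G a = t \<and> F a}
                 = (if t then q else p) * indicator {a. truepos S G a = t} a"
      using prob_flip_pmf_flipped[OF assms, of a m S G] by (cases "truepos S G a = t") auto
  qed
  also have "\<dots> = (if t then q else p) * real (truecount m t S G)"
    unfolding truecount_def by (subst real_card_filter_eq_sum_indicator) (simp_all add: sum_distrib_left)
  finally show ?thesis .
qed

lemma bounded_differences_flipcount:
  "bounded_differences {..<m} (set_pmf (flip_pmf m p q S G)) (\<lambda>F. real (mcount m t True (S, G, F))) (\<lambda>_. 1)"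
proof (rule bounded_differencesI)
  fix i and F F' :: "nat \<Rightarrow> bool" assume agree: "\<And>j. j \<noteq> i \<Longrightarrow> F j = F' j"
  have "{a \<in> {..<m}. truepos S G a = t \<and> F' a} \<subseteq> insert i {a \<in> {..<m}. truepos S G a = t \<and> F a}"
    using agree by auto
  then have "card {a \<in> {..<m}. truepos S G a = t \<and> F' a} \<le> card (insert i {a \<in> {..<m}. truepos S G a = t \<and> F a})"
    by (intro card_mono) auto
  also have "\<dots> \<le> card {a \<in> {..<m}. truepos S G a = t \<and> F a} + 1"
    by (simp add: card_insert_if)
  finally show "real (mcount m t True (S, G, F')) \<le> real (mcount m t True (S, G, F)) + 1"
    unfolding mcount_Pair by simp
qed

lemma flipcount_concentration:
  assumes "0 \<le> p" "p \<le> 1" "0 \<le> q" "q \<le> 1" "t > 0"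
  shows "measure_pmf.prob (flip_pmf m p q S G)
           {F. t \<le> \<bar>real (mcount m b True (S, G, F)) - (if b then q else p) * real (truecount m b S G)\<bar>}
         \<le> 2 * exp (- 2 * t\<^sup>2 / real m)"
proof -
  have "measure_pmf.prob (flip_pmf m p q S G)
          {F. t \<le> \<bar>real (mcount m b True (S, G, F)) -
                   measure_pmf.expectation (flip_pmf m p q S G) (\<lambda>F. real (mcount m b True (S, G, F)))\<bar>}
        \<le> 2 * exp (- 2 * t\<^sup>2 / (\<Sum>a<m. 1\<^sup>2))"
    unfolding flip_pmf_def
    by (rule McDiarmid_inequality_Pi_pmf[OF _ _ bounded_differences_flipcount[unfolded flip_pmf_def]
          \<open>t > 0\<close>]) (simp_all add: finite_subset[OF subset_UNIV])
  then show ?thesis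
    by (simp add: expectation_flipcount[OF assms(1-4)])
qed

lemma gt_model_eq:
  "gt_model n K m D p q = infected_pmf n K \<bind> (\<lambda>S. design_pmf n m D \<bind>
     (\<lambda>G. map_pmf (\<lambda>F. (S, G, F)) (flip_pmf m p q S G)))"
  by (simp add: gt_model_def map_pmf_def)

lemma prob_gt_model_le:
  assumes "\<And>S G. S \<in> set_pmf (infected_pmf n K) \<Longrightarrow> G \<in> set_pmf (design_pmf n m D) \<Longrightarrow>
             measure_pmf.prob (flip_pmf m p q S G) {F. (S, G, F) \<in> A} \<le> b"
  shows "measure_pmf.prob (gt_model n K m D p q) A \<le> b"
  unfolding gt_model_eq by (intro measure_bind_pmf_le) (simp add: assms vimage_def)

lemma prob_gt_model_design_event_le:
  assumes "\<And>S. S \<in> set_pmf (infected_pmf n K) \<Longrightarrow> measure_pmf.prob (design_pmf n m D) {G. P S G} \<le> b"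
  shows "measure_pmf.prob (gt_model n K m D p q) {(S, G, F). P S G} \<le> b"
proof -
  have preimage: "{(S, G, F). P S G} = (\<lambda>(S, G, F). (S, G)) -` {(S, G). P S G}"
    by auto
  have "measure_pmf.prob (gt_model n K m D p q) {(S, G, F). P S G}
               = measure_pmf.prob (map_pmf (\<lambda>(S, G, F). (S, G)) (gt_model n K m D p q)) {(S, G). P S G}"
    unfolding measure_map_pmf by (simp only: preimage)
  also have "map_pmf (\<lambda>(S, G, F). (S, G)) (gt_model n K m D p q)
               = infected_pmf n K \<bind> (\<lambda>S. map_pmf (Pair S) (design_pmf n m D))"
    by (simp add: gt_model_eq map_bind_pmf map_pmf_comp map_pmf_def[of "Pair _"])
  also have "measure_pmf.prob \<dots> {(S, G). P S G} \<le> b"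
    by (intro measure_bind_pmf_le) (simp add: assms vimage_def)
  finally show ?thesis .
qed

lemma truecount_False_add_True: "truecount m False S G + truecount m True S G = m"
  using card_filter_add_card_filter_not[of "{..<m}" "\<lambda>a. \<not> truepos S G a"]
  by (simp add: truecount_def)

lemma mcount_True_add_False: "mcount m t True (S, G, F) + mcount m t False (S, G, F) = truecount m t S G"
  using card_filter_add_card_filter_not[of "{a \<in> {..<m}. truepos S G a = t}" F]
  by (simp add: mcount_Pair truecount_def conj_assoc)

lemma split_counts_deviation:
  fixes x f0 f1 M e p q t :: real
  assumes "0 \<le> p" "p \<le> 1" "0 \<le> q" "q \<le> 1"
    and x: "\<bar>x - e * M\<bar> \<le> 2 * t" and f0: "\<bar>f0 - p * x\<bar> \<le> t" and f1: "\<bar>f1 - q * (M - x)\<bar> \<le> t"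
  shows "\<bar>f0 - e * p * M\<bar> \<le> 3 * t" "\<bar>(x - f0) - e * (1 - p) * M\<bar> \<le> 3 * t"
    and "\<bar>f1 - (1 - e) * q * M\<bar> \<le> 3 * t" "\<bar>(M - x - f1) - (1 - e) * (1 - q) * M\<bar> \<le> 3 * t"
proof -
  have scaled: "\<bar>r * (x - e * M)\<bar> \<le> 2 * t" if "0 \<le> r" "r \<le> 1" for r
    using mult_mono[OF that(2) x] that by (simp add: abs_mult)
  have "f0 - e * p * M = (f0 - p * x) + p * (x - e * M)"
    and "(x - f0) - e * (1 - p) * M = (1 - p) * (x - e * M) - (f0 - p * x)"
    and "f1 - (1 - e) * q * M = (f1 - q * (M - x)) - q * (x - e * M)"
    and "(M - x - f1) - (1 - e) * (1 - q) * M = - ((1 - q) * (x - e * M)) - (f1 - q * (M - x))"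
    by (simp_all add: algebra_simps)
  moreover have "\<bar>p * (x - e * M)\<bar> \<le> 2 * t" "\<bar>(1 - p) * (x - e * M)\<bar> \<le> 2 * t"
    and "\<bar>q * (x - e * M)\<bar> \<le> 2 * t" "\<bar>(1 - q) * (x - e * M)\<bar> \<le> 2 * t"
    using assms(1-4) by (simp_all add: scaled)
  ultimately show "\<bar>f0 - e * p * M\<bar> \<le> 3 * t" "\<bar>(x - f0) - e * (1 - p) * M\<bar> \<le> 3 * t"
    and "\<bar>f1 - (1 - e) * q * M\<bar> \<le> 3 * t" "\<bar>(M - x - f1) - (1 - e) * (1 - q) * M\<bar> \<le> 3 * t"
    using f0 f1 by (smt (verit))+
qed

(* e stands for the fraction e^(-d) of truly negative tests. *)
definition counts_within ::
    "nat \<Rightarrow> real \<Rightarrow> real \<Rightarrow> real \<Rightarrow> real \<Rightarrow> nat set \<times> (nat \<Rightarrow> nat set) \<times> (nat \<Rightarrow> bool) \<Rightarrow> bool" where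
  "counts_within m e p q r \<omega> \<longleftrightarrow>
     \<bar>real (mcount m False True \<omega>) - e * p * real m\<bar> \<le> r \<and>
     \<bar>real (mcount m False False \<omega>) - e * (1 - p) * real m\<bar> \<le> r \<and>
     \<bar>real (mcount m True True \<omega>) - (1 - e) * q * real m\<bar> \<le> r \<and>
     \<bar>real (mcount m True False \<omega>) - (1 - e) * (1 - q) * real m\<bar> \<le> r"

lemma counts_within_if_concentrated:
  assumes "0 \<le> p" "p \<le> 1" "0 \<le> q" "q \<le> 1"
    and "\<bar>real (truecount m False S G) - e * real m\<bar> \<le> 2 * t"
    and "\<bar>real (mcount m False True (S, G, F)) - p * real (truecount m False S G)\<bar> \<le> t"
    and "\<bar>real (mcount m True True (S, G, F)) - q * real (truecount m True S G)\<bar> \<le> t"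
  shows "counts_within m e p q (3 * t) (S, G, F)"
proof -
  have true_eq: "real (truecount m True S G) = real m - real (truecount m False S G)"
    using truecount_False_add_True[of m S G] by linarith
  have unflipped_eq: "real (mcount m b False (S, G, F))
                        = real (truecount m b S G) - real (mcount m b True (S, G, F))" for b
    using mcount_True_add_False[of m b S G F] by linarith
  from assms(7) have "\<bar>real (mcount m True True (S, G, F)) - q * (real m - real (truecount m False S G))\<bar> \<le> t"
    by (simp only: true_eq)
  from split_counts_deviation[OF assms(1-6) this] show ?thesis
    unfolding counts_within_def unflipped_eq true_eq by simp
qed

lemma gt_model_counts_deviation:
  assumes "K \<le> n" "D \<le> m" "0 \<le> p" "p \<le> 1" "0 \<le> q" "q \<le> 1" "t > 0"
    and approx: "\<bar>real m * (1 - real D / real m) ^ K - e * real m\<bar> \<le> t"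
  shows "measure_pmf.prob (gt_model n K m D p q) {\<omega>. \<not> counts_within m e p q (3 * t) \<omega>}
           \<le> 2 * exp (- 2 * t\<^sup>2 / (real K * (real D)\<^sup>2)) + 4 * exp (- 2 * t\<^sup>2 / real m)"
proof -
  let ?P = "gt_model n K m D p q"
  define E0 where "E0 = {(S, G, F :: nat \<Rightarrow> bool).
    t \<le> \<bar>real (truecount m False S G) - real m * (1 - real D / real m) ^ K\<bar>}"
  define E1 where "E1 b = {(S, G, F).
    t \<le> \<bar>real (mcount m b True (S, G, F)) - (if b then q else p) * real (truecount m b S G)\<bar>}" for b
  have "counts_within m e p q (3 * t) \<omega>" if "\<omega> \<notin> E0 \<union> E1 False \<union> E1 True" for \<omega>
    using that approx
    by (cases \<omega>) (auto simp: E0_def E1_def intro!: counts_within_if_concentrated assms(3-6))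
  then have "{\<omega>. \<not> counts_within m e p q (3 * t) \<omega>} \<subseteq> E0 \<union> E1 False \<union> E1 True"
    by blast
  then have "measure_pmf.prob ?P {\<omega>. \<not> counts_within m e p q (3 * t) \<omega>}
               \<le> measure_pmf.prob ?P (E0 \<union> E1 False \<union> E1 True)"
    by (intro measure_pmf.finite_measure_mono) auto
  also have "\<dots> \<le> measure_pmf.prob ?P E0 + measure_pmf.prob ?P (E1 False) + measure_pmf.prob ?P (E1 True)"
    using measure_Un_le[of "E0 \<union> E1 False" ?P "E1 True"] measure_Un_le[of E0 ?P "E1 False"] by simp
  moreover have "measure_pmf.prob ?P E0 \<le> 2 * exp (- 2 * t\<^sup>2 / (real K * (real D)\<^sup>2))"
    unfolding E0_def using assms
    by (intro prob_gt_model_design_event_le truecount_negative_concentration)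
       (auto simp: infected_pmf_def set_pmf_of_subsets_card)
  moreover have "measure_pmf.prob ?P (E1 b) \<le> 2 * exp (- 2 * t\<^sup>2 / real m)" for b
  proof (rule prob_gt_model_le)
    fix S G
    show "measure_pmf.prob (flip_pmf m p q S G) {F. (S, G, F) \<in> E1 b} \<le> 2 * exp (- 2 * t\<^sup>2 / real m)"
      using flipcount_concentration[OF assms(3-7), of m S G b] by (simp add: E1_def)
  qed
  ultimately show ?thesis
    by (smt (verit))
qed

lemma one_minus_power_approx_exp:
  fixes x :: real
  assumes "0 \<le> x" "x \<le> 1 / 2"
  shows "\<bar>(1 - x) ^ K - exp (- (real K * x))\<bar> \<le> 2 * real K * x\<^sup>2"
proof -
  have upper: "(1 - x) ^ K \<le> exp (- (real K * x))"
  proof -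
    have "(1 - x) ^ K \<le> exp (- x) ^ K"
      using assms by (intro power_mono) (auto simp: exp_ge_add_one_self[of "- x", simplified])
    then show ?thesis by (simp add: exp_of_nat_mult[symmetric])
  qed
  have "exp (- (real K * x)) * exp (- (2 * real K * x\<^sup>2)) = exp (real K * (- x - 2 * x\<^sup>2))"
    by (simp add: mult_exp_exp algebra_simps)
  also have "\<dots> \<le> exp (real K * ln (1 - x))"
    using ln_one_minus_pos_lower_bound[OF assms] by (simp add: mult_left_mono)
  also have "\<dots> = (1 - x) ^ K"
    using assms by (simp add: exp_of_nat_mult)
  finally have "exp (- (real K * x)) * (1 - 2 * real K * x\<^sup>2) \<le> (1 - x) ^ K"
    using exp_ge_add_one_self[of "- (2 * real K * x\<^sup>2)"]
    by (smt (verit, best) exp_gt_zero mult_left_mono)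
  then have "exp (- (real K * x)) - (1 - x) ^ K \<le> exp (- (real K * x)) * (2 * real K * x\<^sup>2)"
    by (simp add: algebra_simps)
  also have "\<dots> \<le> 2 * real K * x\<^sup>2"
    using assms by (intro mult_left_le_one_le) auto
  finally show ?thesis using upper by linarith
qed

lemma regime_weight_le:
  fixes cn dn l L :: real
  assumes "0 < cn" "0 \<le> l" "l \<le> L" "2 * cn * dn\<^sup>2 \<le> L ^ 3"
  shows "cn * dn\<^sup>2 * l \<le> L ^ 4 / 2"
proof -
  have "cn * dn\<^sup>2 * l \<le> cn * dn\<^sup>2 * L"
    using assms by (intro mult_left_mono) auto
  also have "\<dots> \<le> L ^ 3 / 2 * L"
    using assms by (intro mult_right_mono) auto
  finally show ?thesis by (simp add: power_numeral_reduce)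
qed

lemma design_regime_mean_approx:
  fixes K m D :: nat and cn dn l L :: real
  assumes "0 < cn" "0 < dn" and m: "real m = cn * real K * l" and D: "real D = cn * dn * l"
    and "0 < l" "l \<le> L" "2 * dn \<le> real K" "2 * cn * dn\<^sup>2 \<le> L ^ 3"
  shows "0 < D" "D \<le> m"
    and "\<bar>real m * (1 - real D / real m) ^ K - exp (- dn) * real m\<bar> \<le> sqrt (real m) * L ^ 4"
proof -
  define x where "x = real D / real m"
  have "real K > 0" "real m > 0" "real D > 0"
    using assms by auto
  then show "0 < D" by simp
  have x: "real K * x = dn"
    unfolding x_def m D using \<open>real K > 0\<close> assms(1,5) by (simp add: field_simps)
  then have "x = dn / real K"
    using \<open>real K > 0\<close> by (simp add: eq_divide_eq mult.commute)
  then have "0 \<le> x" "x \<le> 1 / 2"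
    using \<open>real K > 0\<close> assms(2,7) by simp_all
  then show "D \<le> m"
    using \<open>real m > 0\<close> unfolding x_def by (simp add: field_simps)
  have "\<bar>real m * (1 - x) ^ K - exp (- dn) * real m\<bar> = real m * \<bar>(1 - x) ^ K - exp (- (real K * x))\<bar>"
    by (simp add: x[symmetric] abs_mult flip: right_diff_distrib mult.commute)
  also have "\<dots> \<le> real m * (2 * real K * x\<^sup>2)"
    using \<open>0 \<le> x\<close> \<open>x \<le> 1 / 2\<close> by (intro mult_left_mono one_minus_power_approx_exp) simp_all
  also have "\<dots> = 2 * (cn * dn\<^sup>2 * l)"
    using \<open>real m > 0\<close> \<open>real K > 0\<close> unfolding x_def m D by (simp add: field_simps power2_eq_square)
  also have "\<dots> \<le> L ^ 4"
    using regime_weight_le[of cn l L dn] assms by simp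
  also have "\<dots> \<le> sqrt (real m) * L ^ 4"
    using \<open>real m > 0\<close> mult_right_mono[of 1 "sqrt (real m)" "L ^ 4"] assms(5,6) by simp
  finally show "\<bar>real m * (1 - real D / real m) ^ K - exp (- dn) * real m\<bar> \<le> sqrt (real m) * L ^ 4"
    unfolding x_def .
qed

lemma design_regime_tails:
  fixes K m D :: nat and cn dn l L :: real
  assumes "0 < cn" "0 < dn" "0 < K" and m: "real m = cn * real K * l" and D: "real D = cn * dn * l"
    and "0 < l" "l \<le> L" "2 \<le> L" "2 * cn * dn\<^sup>2 \<le> L ^ 3"
  shows "exp (- 2 * (sqrt (real m) * L ^ 4)\<^sup>2 / (real K * (real D)\<^sup>2)) \<le> exp (- 4 * L)"
    and "exp (- 2 * (sqrt (real m) * L ^ 4)\<^sup>2 / real m) \<le> exp (- 4 * L)"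
proof -
  define w where "w = cn * dn\<^sup>2 * l"
  have "real m > 0" "w > 0"
    using assms by (auto simp: w_def)
  have KD: "real K * (real D)\<^sup>2 = real m * w"
    unfolding m D w_def by (simp add: power2_eq_square)
  have sq: "(sqrt (real m) * L ^ 4)\<^sup>2 = real m * L ^ 8"
    using \<open>real m > 0\<close> by (simp add: power_mult_distrib flip: power_mult)
  have "2 \<le> L ^ 3"
    using power_mono[of 2 L 3] assms(8) by simp
  then have "L * 2 \<le> L * L ^ 3"
    using assms(8) by (intro mult_left_mono) auto
  moreover have "L ^ 4 \<le> L ^ 8"
    using assms(8) by (intro power_increasing) auto
  ultimately have L4: "4 * L \<le> 2 * L ^ 4" "2 * L ^ 4 \<le> 2 * L ^ 8"
    by (simp_all add: power_numeral_reduce)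
  have "4 * L * w \<le> 2 * L ^ 4 * (L ^ 4 / 2)"
    using regime_weight_le[of cn l L dn] assms \<open>w > 0\<close>
    by (intro mult_mono[OF L4(1)]) (auto simp: w_def)
  also have "\<dots> \<le> 2 * L ^ 8"
    by (simp add: power_add[symmetric])
  finally have "4 * L \<le> 2 * L ^ 8 / w"
    using \<open>w > 0\<close> by (simp add: pos_le_divide_eq)
  then show "exp (- 2 * (sqrt (real m) * L ^ 4)\<^sup>2 / (real K * (real D)\<^sup>2)) \<le> exp (- 4 * L)"
    using \<open>real m > 0\<close> by (simp add: sq KD)
  show "exp (- 2 * (sqrt (real m) * L ^ 4)\<^sup>2 / real m) \<le> exp (- 4 * L)"
    using \<open>real m > 0\<close> L4 by (simp add: sq)
qed

lemma gt_model_counts_deviation_regime: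
  fixes n K m D :: nat and cn dn p q :: real
  assumes "0 < cn" "0 < dn" "0 < K" "K < n" "2 * dn \<le> real K"
    and "2 \<le> ln (real n)" "2 * cn * dn\<^sup>2 \<le> ln (real n) ^ 3"
    and "real m = cn * real K * ln (real n / real K)" "real D = cn * dn * ln (real n / real K)"
    and "0 \<le> p" "p \<le> 1" "0 \<le> q" "q \<le> 1"
  shows "measure_pmf.prob (gt_model n K m D p q)
           {\<omega>. \<not> counts_within m (exp (- dn)) p q (3 * sqrt (real m) * ln (real n) ^ 4) \<omega>}
         \<le> 6 * exp (- 4 * ln (real n))"
proof -
  have "0 < ln (real n / real K)" "ln (real n / real K) \<le> ln (real n)"
    using assms(3,4) by (simp_all add: ln_div)
  note mean = design_regime_mean_approx[OF assms(1,2,8,9) this assms(5,7)]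
  note tails = design_regime_tails[OF assms(1-3,8,9) \<open>0 < ln (real n / real K)\<close>
                                    \<open>ln (real n / real K) \<le> ln (real n)\<close> assms(6,7)]
  have "0 < sqrt (real m) * ln (real n) ^ 4"
    using mean(1,2) assms(6) by simp
  from gt_model_counts_deviation[OF less_imp_le[OF assms(4)] mean(2) assms(10-13) this mean(3)]
  have "measure_pmf.prob (gt_model n K m D p q)
          {\<omega>. \<not> counts_within m (exp (- dn)) p q (3 * (sqrt (real m) * ln (real n) ^ 4)) \<omega>}
        \<le> 2 * exp (- 4 * ln (real n)) + 4 * exp (- 4 * ln (real n))"
    using tails by linarith
  then show ?thesis
    by (simp add: mult.assoc)
qed

lemma eventually_design_regime:
  fixes \<theta> c d :: real and k :: "nat \<Rightarrow> nat" and cn dn :: "nat \<Rightarrow> real"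
  assumes "0 < \<theta>" "\<theta> < 1" and k: "(\<lambda>n. real (k n) / real n powr \<theta>) \<longlonglongrightarrow> 1"
    and "cn \<longlonglongrightarrow> c" "dn \<longlonglongrightarrow> d" "0 < c" "0 < d"
  shows "\<forall>\<^sub>F n in sequentially. 0 < cn n \<and> 0 < dn n \<and> 0 < k n \<and> k n < n \<and> 2 * dn n \<le> real (k n) \<and>
           2 \<le> ln (real n) \<and> 2 * cn n * (dn n)\<^sup>2 \<le> ln (real n) ^ 3"
proof -
  have powr_cancel: "\<forall>\<^sub>F n in sequentially. real (k n) / real n powr \<theta> * real n powr \<theta> = real (k n)"
    using eventually_gt_at_top[of 0] by eventually_elim simp
  have "filterlim (\<lambda>n. real (k n) / real n powr \<theta> * real n powr \<theta>) at_top sequentially"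
    using \<open>0 < \<theta>\<close> by (intro filterlim_tendsto_pos_mult_at_top[OF k]) (simp, real_asymp)
  then have k_top: "filterlim (\<lambda>n. real (k n)) at_top sequentially"
    by (rule filterlim_mono_eventually[OF _ order_refl order_refl powr_cancel])
  have "(\<lambda>n. real n powr \<theta> / real n) \<longlonglongrightarrow> 0"
    using \<open>\<theta> < 1\<close> by real_asymp
  from tendsto_mult[OF k this]
  have "(\<lambda>n. real (k n) / real n powr \<theta> * (real n powr \<theta> / real n)) \<longlonglongrightarrow> 0"
    by simp
  then have "(\<lambda>n. real (k n) / real n) \<longlonglongrightarrow> 0"
    by (rule Lim_transform_eventually) (use eventually_gt_at_top[of 0] in \<open>eventually_elim, simp\<close>)
  then have "\<forall>\<^sub>F n in sequentially. real (k n) / real n < 1"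
    by (rule order_tendstoD) simp
  moreover have "\<forall>\<^sub>F n in sequentially. 2 * (d + 1) \<le> real (k n)"
    using k_top by (simp add: filterlim_at_top)
  moreover have "\<forall>\<^sub>F n in sequentially. 0 < cn n"
    using assms(4,6) by (rule order_tendstoD)
  moreover have "\<forall>\<^sub>F n in sequentially. 0 < dn n \<and> dn n < d + 1"
    using assms(5,7) by (intro eventually_conj order_tendstoD) auto
  moreover have "\<forall>\<^sub>F n in sequentially. 2 * cn n * (dn n)\<^sup>2 < 2 * c * d\<^sup>2 + 1"
  proof (rule order_tendstoD)
    show "(\<lambda>n. 2 * cn n * (dn n)\<^sup>2) \<longlonglongrightarrow> 2 * c * d\<^sup>2"
      using assms(4,5) by (intro tendsto_intros)
  qed simp
  moreover have "\<forall>\<^sub>F n in sequentially. 2 \<le> ln (real n) \<and> 2 * c * d\<^sup>2 + 1 \<le> ln (real n) ^ 3"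
    by (intro eventually_conj; real_asymp)
  moreover have "\<forall>\<^sub>F n in sequentially. 0 < n"
    by (rule eventually_gt_at_top)
  ultimately show ?thesis
    by eventually_elim (auto simp: field_split_simps)
qed

theorem corollaryA5:
  fixes \<theta> c d p q :: real
    and k m \<Delta> :: "nat \<Rightarrow> nat"
    and cn dn :: "nat \<Rightarrow> real"
  assumes \<theta>: "0 < \<theta>" "\<theta> < 1"
    and k_asymp: "(\<lambda>n. real (k n) / real n powr \<theta>) \<longlonglongrightarrow> 1"
    and cd_pos: "0 < c" "0 < d"
    and cn_lim: "cn \<longlonglongrightarrow> c" and dn_lim: "dn \<longlonglongrightarrow> d"
    and m_def: "\<forall>\<^sub>F n in sequentially. real (m n) = cn n * real (k n) * ln (real n / real (k n))"
    and \<Delta>_def: "\<forall>\<^sub>F n in sequentially. real (\<Delta> n) = cn n * dn n * ln (real n / real (k n))"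
    and pq: "0 \<le> p" "0 \<le> q" "p + q < 1"
  shows "\<exists>C. (\<lambda>n. measure_pmf.prob (gt_model n (k n) (m n) (\<Delta> n) p q)
             {\<omega>. \<not> (
               \<bar>real (mcount (m n) False True \<omega>) - exp (- dn n) * p * real (m n)\<bar>
                  \<le> C * sqrt (real (m n)) * ln (real n) ^ 4 \<and>
               \<bar>real (mcount (m n) False False \<omega>) - exp (- dn n) * (1 - p) * real (m n)\<bar>
                  \<le> C * sqrt (real (m n)) * ln (real n) ^ 4 \<and>
               \<bar>real (mcount (m n) True True \<omega>) - (1 - exp (- dn n)) * q * real (m n)\<bar>
                  \<le> C * sqrt (real (m n)) * ln (real n) ^ 4 \<and>
               \<bar>real (mcount (m n) True False \<omega>) - (1 - exp (- dn n)) * (1 - q) * real (m n)\<bar>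
                  \<le> C * sqrt (real (m n)) * ln (real n) ^ 4)})
           \<in> o(\<lambda>n. 1 / real n ^ 2)"
proof -
  have "\<forall>\<^sub>F n in sequentially. measure_pmf.prob (gt_model n (k n) (m n) (\<Delta> n) p q)
          {\<omega>. \<not> counts_within (m n) (exp (- dn n)) p q (3 * sqrt (real (m n)) * ln (real n) ^ 4) \<omega>}
        \<le> 6 * exp (- 4 * ln (real n))"
    using eventually_design_regime[OF \<theta> k_asymp cn_lim dn_lim cd_pos] m_def \<Delta>_def
  proof eventually_elim
    case (elim n)
    then have "0 < cn n" "0 < dn n" "0 < k n" "k n < n" "2 * dn n \<le> real (k n)" "2 \<le> ln (real n)"
      "2 * cn n * (dn n)\<^sup>2 \<le> ln (real n) ^ 3" by simp_all
    with elim(2,3) pq show ?case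
      by (intro gt_model_counts_deviation_regime) simp_all
  qed
  then have "(\<lambda>n. measure_pmf.prob (gt_model n (k n) (m n) (\<Delta> n) p q)
          {\<omega>. \<not> counts_within (m n) (exp (- dn n)) p q (3 * sqrt (real (m n)) * ln (real n) ^ 4) \<omega>})
        \<in> O(\<lambda>n. exp (- 4 * ln (real n)))"
    by (intro bigoI[where c = 6]) (auto elim!: eventually_mono)
  moreover have "(\<lambda>n. exp (- 4 * ln (real n))) \<in> o(\<lambda>n. 1 / real n ^ 2)"
    by real_asymp
  ultimately have "(\<lambda>n. measure_pmf.prob (gt_model n (k n) (m n) (\<Delta> n) p q)
          {\<omega>. \<not> counts_within (m n) (exp (- dn n)) p q (3 * sqrt (real (m n)) * ln (real n) ^ 4) \<omega>})
        \<in> o(\<lambda>n. 1 / real n ^ 2)"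
    by (rule landau_o.big_small_trans)
  then show ?thesis
    unfolding counts_within_def by - (rule exI)
qed

end
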